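(* If two topological coarse spaces $X$ and $Y$ are coarsely equivalent, then $\mathrm{Ends}(X)$ is homeomorphic to $\mathrm{Ends}(Y)$.
   Context: For a family $\mathcal U$ of subsets of $X$ and $A\subset X$, $st(A,\mathcal U)$ is the union of all $U\in\mathcal U$ meeting $A$; $st(\mathcal U,\mathcal V)=\{st(U,\mathcal V):U\in\mathcal U\}$. A large scale space is a set with a family of covers (uniformly bounded covers) closed under $st(\cdot,\cdot)$ and under passing to refinements; bounded sets are subsets of elements of uniformly bounded covers. A topological coarse space is a large scale space with a topology such that some uniformly bounded cover consists of open sets, and the union of two bounded sets is bounded. $A\subset X$ is coarsely clopen if $st(A,\mathcal U)\cap st(X\setminus A,\mathcal U)$ is bounded for every uniformly bounded $\mathcal U$. An end is a family of unbounded open coarsely clopen subsets of $X$, maximal among such families closed under finite intersections; $\mathrm{Ends}(X)$ carries the topology in which, for open coarsely clopen $U$, the sets $\{E: U\in E\}$ form a basis (the subspace topology from $X\cup\mathrm{Ends}(X)$, where $Y$ is open iff $Y\cap X$ is open and each end $E\in Y$ has an open coarsely clopen $U\in E$ with $U\cup\{E':U\in E'\}\subset Y$). A map $f:X\to Y$ is coarse if preimages of bounded sets are bounded and large scale continuous if images of uniformly bounded covers are uniformly bounded; $f,g:X\to Y$ are close if there is a uniformly bounded cover $\mathcal U$ of $Y$ with $f(x)\in st(g(x),\mathcal U)$ for all $x$. $X,Y$ are coarsely equivalent if there are coarse large scale continuous $f:X\to Y$, $g:Y\to X$ with $g\circ f$ close to $\mathrm{id}_X$ and $f\circ g$ close to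 $\mathrm{id}_Y$. *)

theory Defs
  imports "HOL-Analysis.Analysis"
begin

definition st :: "'a set \<Rightarrow> 'a set set \<Rightarrow> 'a set" where
  "st A \<U> = \<Union>{U \<in> \<U>. U \<inter> A \<noteq> {}}"

definition st_fam :: "'a set set \<Rightarrow> 'a set set \<Rightarrow> 'a set set" where
  "st_fam \<U> \<V> = (\<lambda>U. st U \<V>) ` \<U>"

definition is_cover :: "'a set \<Rightarrow> 'a set set \<Rightarrow> bool" where
  "is_cover X \<U> \<longleftrightarrow> \<U> \<subseteq> Pow X \<and> \<Union>\<U> = X"

definition refines :: "'a set set \<Rightarrow> 'a set set \<Rightarrow> bool" where
  "refines \<V> \<U> \<longleftrightarrow> (\<forall>V\<in>\<V>. \<exists>U\<in>\<U>. V \<subseteq> U)"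

text \<open>A large scale structure on X: a set LS of covers of X (the uniformly bounded covers),
  closed under stars and under passing to refining covers.\<close>
definition large_scale :: "'a set \<Rightarrow> 'a set set set \<Rightarrow> bool" where
  "large_scale X LS \<longleftrightarrow>
     (\<forall>\<U>\<in>LS. is_cover X \<U>) \<and>
     (\<forall>\<U>\<in>LS. \<forall>\<V>\<in>LS. st_fam \<U> \<V> \<in> LS) \<and>
     (\<forall>\<U>\<in>LS. \<forall>\<V>. is_cover X \<V> \<and> refines \<V> \<U> \<longrightarrow> \<V> \<in> LS)"

definition ls_bounded :: "'a set set set \<Rightarrow> 'a set \<Rightarrow> bool" where
  "ls_bounded LS B \<longleftrightarrow> (\<exists>\<U>\<in>LS. \<exists>U\<in>\<U>. B \<subseteq> U)"

definition ub_family :: "'a set set set \<Rightarrow> 'a set set \<Rightarrow> bool" where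
  "ub_family LS \<V> \<longleftrightarrow> (\<exists>\<U>\<in>LS. refines \<V> \<U>)"

definition top_coarse_space :: "'a topology \<Rightarrow> 'a set set set \<Rightarrow> bool" where
  "top_coarse_space T LS \<longleftrightarrow>
     large_scale (topspace T) LS \<and>
     (\<exists>\<U>\<in>LS. \<forall>U\<in>\<U>. openin T U) \<and>
     (\<forall>A B. A \<subseteq> topspace T \<and> B \<subseteq> topspace T \<and> ls_bounded LS A \<and> ls_bounded LS B
            \<longrightarrow> ls_bounded LS (A \<union> B))"

definition coarsely_clopen :: "'a set \<Rightarrow> 'a set set set \<Rightarrow> 'a set \<Rightarrow> bool" where
  "coarsely_clopen X LS A \<longleftrightarrow> A \<subseteq> X \<and>
     (\<forall>\<U>\<in>LS. ls_bounded LS (st A \<U> \<inter> st (X - A) \<U>))"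

definition end_set :: "'a topology \<Rightarrow> 'a set set set \<Rightarrow> 'a set \<Rightarrow> bool" where
  "end_set T LS U \<longleftrightarrow> openin T U \<and> coarsely_clopen (topspace T) LS U \<and> \<not> ls_bounded LS U"

definition end_candidate :: "'a topology \<Rightarrow> 'a set set set \<Rightarrow> 'a set set \<Rightarrow> bool" where
  "end_candidate T LS E \<longleftrightarrow> E \<noteq> {} \<and> (\<forall>U\<in>E. end_set T LS U) \<and>
     (\<forall>U\<in>E. \<forall>V\<in>E. U \<inter> V \<in> E)"

definition is_end :: "'a topology \<Rightarrow> 'a set set set \<Rightarrow> 'a set set \<Rightarrow> bool" where
  "is_end T LS E \<longleftrightarrow> end_candidate T LS E \<and>
     (\<forall>E'. end_candidate T LS E' \<and> E \<subseteq> E' \<longrightarrow> E' = E)"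

definition Ends :: "'a topology \<Rightarrow> 'a set set set \<Rightarrow> 'a set set set" where
  "Ends T LS = {E. is_end T LS E}"

definition ends_topology :: "'a topology \<Rightarrow> 'a set set set \<Rightarrow> 'a set set topology" where
  "ends_topology T LS = subtopology
     (topology_generated_by
        {{E \<in> Ends T LS. U \<in> E} | U. openin T U \<and> coarsely_clopen (topspace T) LS U})
     (Ends T LS)"

definition coarse_map :: "'a set \<Rightarrow> 'a set set set \<Rightarrow> 'b set \<Rightarrow> 'b set set set \<Rightarrow> ('a \<Rightarrow> 'b) \<Rightarrow> bool" where
  "coarse_map X LSX Y LSY f \<longleftrightarrow>
     (\<forall>B. B \<subseteq> Y \<and> ls_bounded LSY B \<longrightarrow> ls_bounded LSX {x \<in> X. f x \<in> B})"

definition ls_continuous :: "'a set set set \<Rightarrow> 'b set set set \<Rightarrow> ('a \<Rightarrow> 'b) \<Rightarrow> bool" where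
  "ls_continuous LSX LSY f \<longleftrightarrow> (\<forall>\<U>\<in>LSX. ub_family LSY ((\<lambda>U. f ` U) ` \<U>))"

definition close_maps :: "'a set \<Rightarrow> 'b set set set \<Rightarrow> ('a \<Rightarrow> 'b) \<Rightarrow> ('a \<Rightarrow> 'b) \<Rightarrow> bool" where
  "close_maps X LSY f g \<longleftrightarrow> (\<exists>\<U>\<in>LSY. \<forall>x\<in>X. f x \<in> st {g x} \<U>)"

definition coarsely_equivalent ::
  "'a topology \<Rightarrow> 'a set set set \<Rightarrow> 'b topology \<Rightarrow> 'b set set set \<Rightarrow> bool" where
  "coarsely_equivalent TX LSX TY LSY \<longleftrightarrow>
     (\<exists>f g. f \<in> topspace TX \<rightarrow> topspace TY \<and> g \<in> topspace TY \<rightarrow> topspace TX \<and>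
        coarse_map (topspace TX) LSX (topspace TY) LSY f \<and> ls_continuous LSX LSY f \<and>
        coarse_map (topspace TY) LSY (topspace TX) LSX g \<and> ls_continuous LSY LSX g \<and>
        close_maps (topspace TX) LSX (g \<circ> f) id \<and>
        close_maps (topspace TY) LSY (f \<circ> g) id)"

end

theory Submission
  imports Defs
begin

text \<open>A coarse, large scale continuous map f induces a map on ends: E is sent to the family
  of admissible sets V of Y whose preimage contains some member of E up to a bounded set.
  Ends behave like ultrafilters on coarsely clopen sets (for every coarsely clopen A some
  member of an end lies, up to a bounded set, inside A or inside its complement), which makes
  the image family maximal. The preimage of the basic set of ends containing V is the basic set
  of ends containing the star of the preimage of V, so the induced map is continuous. Finally,
  if g \<circ> f is close to the identity then every coarsely clopen U differs from its preimage under
  g \<circ> f by a bounded set, so the induced maps of f and g are mutually inverse.\<close>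

lemma st_mono: "A \<subseteq> B \<Longrightarrow> st A \<U> \<subseteq> st B \<U>"
  unfolding st_def by blast

lemma st_empty [simp]: "st {} \<U> = {}"
  by (simp add: st_def)

lemma openin_st: "(\<And>U. U \<in> \<U> \<Longrightarrow> openin T U) \<Longrightarrow> openin T (st A \<U>)"
  unfolding st_def by (rule openin_Union) blast

lemma ls_bounded_subset: "ls_bounded LS B \<Longrightarrow> A \<subseteq> B \<Longrightarrow> ls_bounded LS A"
  unfolding ls_bounded_def by blast

locale topological_coarse_space =
  fixes T :: "'a topology" and LS :: "'a set set set"
  assumes top_coarse_space: "top_coarse_space T LS"
begin

lemma large_scale: "large_scale (topspace T) LS"
  using top_coarse_space unfolding top_coarse_space_def by (elim conjE)

lemma uniform_cover:
  assumes "\<U> \<in> LS"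
  shows "\<Union>\<U> = topspace T \<and> \<U> \<subseteq> Pow (topspace T)"
proof -
  have "\<forall>\<U>\<in>LS. is_cover (topspace T) \<U>"
    using large_scale unfolding large_scale_def by (elim conjE)
  with assms show ?thesis
    unfolding is_cover_def by blast
qed

lemma st_fam_uniform:
  assumes "\<U> \<in> LS" "\<V> \<in> LS"
  shows "st_fam \<U> \<V> \<in> LS"
proof -
  have "\<forall>\<U>\<in>LS. \<forall>\<V>\<in>LS. st_fam \<U> \<V> \<in> LS"
    using large_scale unfolding large_scale_def by (elim conjE)
  with assms show ?thesis by blast
qed

lemma open_uniform_cover: "\<exists>\<U>\<in>LS. \<forall>U\<in>\<U>. openin T U"
  using top_coarse_space unfolding top_coarse_space_def by (elim conjE)

lemma bounded_subset_topspace: "ls_bounded LS B \<Longrightarrow> B \<subseteq> topspace T"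
  unfolding ls_bounded_def using uniform_cover by blast

lemma bounded_Un: "ls_bounded LS A \<Longrightarrow> ls_bounded LS B \<Longrightarrow> ls_bounded LS (A \<union> B)"
  using top_coarse_space bounded_subset_topspace unfolding top_coarse_space_def by blast

lemma bounded_by_diff: "ls_bounded LS (U - A) \<Longrightarrow> ls_bounded LS A \<Longrightarrow> ls_bounded LS U"
  using bounded_Un ls_bounded_subset by (metis Un_Diff_cancel2 sup_ge1)

lemma bounded_empty: "topspace T \<noteq> {} \<Longrightarrow> ls_bounded LS {}"
  using open_uniform_cover uniform_cover unfolding ls_bounded_def by (metis Union_empty empty_subsetI ex_in_conv)

lemma subset_st:
  assumes "\<U> \<in> LS" "A \<subseteq> topspace T"
  shows "A \<subseteq> st A \<U>"
proof
  fix a assume "a \<in> A"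
  then obtain U where "U \<in> \<U>" "a \<in> U"
    using assms(2) uniform_cover[OF assms(1)] by blast
  with \<open>a \<in> A\<close> show "a \<in> st A \<U>"
    unfolding st_def by blast
qed

lemma st_subset_topspace: "\<U> \<in> LS \<Longrightarrow> st A \<U> \<subseteq> topspace T"
  using uniform_cover unfolding st_def by fastforce

lemma bounded_st:
  assumes "ls_bounded LS B" "\<V> \<in> LS"
  shows "ls_bounded LS (st B \<V>)"
proof -
  obtain \<U> U where "\<U> \<in> LS" "U \<in> \<U>" "B \<subseteq> U"
    using assms(1) unfolding ls_bounded_def by blast
  then have "st U \<V> \<in> st_fam \<U> \<V>" and "st B \<V> \<subseteq> st U \<V>"
    unfolding st_fam_def using st_mono by blast+
  then show ?thesis
    unfolding ls_bounded_def using st_fam_uniform[OF \<open>\<U> \<in> LS\<close> assms(2)] by blast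
qed

lemma coarsely_clopen_boundary:
  "coarsely_clopen (topspace T) LS A \<Longrightarrow> \<U> \<in> LS \<Longrightarrow>
     ls_bounded LS (st A \<U> \<inter> st (topspace T - A) \<U>)"
  unfolding coarsely_clopen_def by blast

lemma bounded_empty_if_coarsely_clopen:
  "coarsely_clopen (topspace T) LS A \<Longrightarrow> ls_bounded LS {}"
  using open_uniform_cover coarsely_clopen_boundary ls_bounded_subset by (metis empty_subsetI)

lemma coarsely_clopen_Int:
  assumes "coarsely_clopen (topspace T) LS A" "coarsely_clopen (topspace T) LS B"
  shows "coarsely_clopen (topspace T) LS (A \<inter> B)"
  unfolding coarsely_clopen_def
proof (intro conjI ballI)
  show "A \<inter> B \<subseteq> topspace T"
    using assms unfolding coarsely_clopen_def by blast
  fix \<U> assume "\<U> \<in> LS"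
  have "st (A \<inter> B) \<U> \<inter> st (topspace T - A \<inter> B) \<U> \<subseteq>
     (st A \<U> \<inter> st (topspace T - A) \<U>) \<union> (st B \<U> \<inter> st (topspace T - B) \<U>)"
    unfolding st_def by blast
  then show "ls_bounded LS (st (A \<inter> B) \<U> \<inter> st (topspace T - A \<inter> B) \<U>)"
    using bounded_Un[OF coarsely_clopen_boundary[OF assms(1) \<open>\<U> \<in> LS\<close>]
        coarsely_clopen_boundary[OF assms(2) \<open>\<U> \<in> LS\<close>]] ls_bounded_subset
    by blast
qed

lemma coarsely_clopen_complement:
  assumes "coarsely_clopen (topspace T) LS A"
  shows "coarsely_clopen (topspace T) LS (topspace T - A)"
proof -
  have "topspace T - (topspace T - A) = A"
    using assms unfolding coarsely_clopen_def by blast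
  then show ?thesis
    using assms unfolding coarsely_clopen_def by (simp add: Int_commute)
qed

lemma coarsely_clopen_topspace:
  "ls_bounded LS {} \<Longrightarrow> coarsely_clopen (topspace T) LS (topspace T)"
  unfolding coarsely_clopen_def by simp

lemma coarsely_clopen_bounded_symdiff:
  assumes "coarsely_clopen (topspace T) LS A" "B \<subseteq> topspace T"
    and "ls_bounded LS ((A - B) \<union> (B - A))"
  shows "coarsely_clopen (topspace T) LS B"
  unfolding coarsely_clopen_def
proof (intro conjI ballI)
  show "B \<subseteq> topspace T" by fact
  fix \<U> assume "\<U> \<in> LS"
  let ?D = "(A - B) \<union> (B - A)"
  have "st B \<U> \<inter> st (topspace T - B) \<U> \<subseteq> (st A \<U> \<inter> st (topspace T - A) \<U>) \<union> st ?D \<U>"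
    unfolding st_def by blast
  then show "ls_bounded LS (st B \<U> \<inter> st (topspace T - B) \<U>)"
    using bounded_Un[OF coarsely_clopen_boundary[OF assms(1) \<open>\<U> \<in> LS\<close>]
        bounded_st[OF assms(3) \<open>\<U> \<in> LS\<close>]] ls_bounded_subset
    by blast
qed

lemma bounded_st_diff:
  assumes "coarsely_clopen (topspace T) LS A" "\<U> \<in> LS"
  shows "ls_bounded LS (st A \<U> - A)"
proof -
  have "st A \<U> - A \<subseteq> st A \<U> \<inter> st (topspace T - A) \<U>"
    using subset_st[OF assms(2), of "topspace T - A"] st_subset_topspace[OF assms(2)] by blast
  then show ?thesis
    using ls_bounded_subset coarsely_clopen_boundary assms by blast
qed

lemma coarsely_clopen_st:
  assumes "coarsely_clopen (topspace T) LS A" "\<U> \<in> LS"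
  shows "coarsely_clopen (topspace T) LS (st A \<U>)"
proof -
  have "A \<subseteq> st A \<U>"
    using subset_st assms unfolding coarsely_clopen_def by blast
  then have "(A - st A \<U>) \<union> (st A \<U> - A) = st A \<U> - A" by blast
  then show ?thesis
    using coarsely_clopen_bounded_symdiff[OF assms(1) st_subset_topspace[OF assms(2)]]
      bounded_st_diff[OF assms]
    by simp
qed

lemma close_to_id_preimage:
  assumes "close_maps (topspace T) LS h id" and "coarsely_clopen (topspace T) LS U"
  shows "ls_bounded LS (U - {x \<in> topspace T. h x \<in> U})"
proof -
  obtain \<W> where \<W>: "\<W> \<in> LS" "\<forall>x\<in>topspace T. h x \<in> st {x} \<W>"
    using assms(1) unfolding close_maps_def by auto
  have "U - {x \<in> topspace T. h x \<in> U} \<subseteq> st U \<W> \<inter> st (topspace T - U) \<W>"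
  proof
    fix x assume x: "x \<in> U - {x \<in> topspace T. h x \<in> U}"
    then have "x \<in> topspace T"
      using assms(2) unfolding coarsely_clopen_def by blast
    then obtain W where "W \<in> \<W>" "x \<in> W" "h x \<in> W"
      using \<W>(2) unfolding st_def by blast
    moreover have "h x \<in> topspace T"
      using \<W> \<open>x \<in> topspace T\<close> st_subset_topspace by blast
    ultimately show "x \<in> st U \<W> \<inter> st (topspace T - U) \<W>"
      using x \<open>x \<in> topspace T\<close> unfolding st_def by blast
  qed
  then show ?thesis
    using ls_bounded_subset coarsely_clopen_boundary[OF assms(2) \<W>(1)] by blast
qed

subsection \<open>Ends\<close>

lemma end_candidate_if_end: "is_end T LS E \<Longrightarrow> end_candidate T LS E"
  unfolding is_end_def by blast

lemma end_maximal: "is_end T LS E \<Longrightarrow> end_candidate T LS E' \<Longrightarrow> E \<subseteq> E' \<Longrightarrow> E' = E"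
  unfolding is_end_def by blast

lemma end_Int: "is_end T LS E \<Longrightarrow> U \<in> E \<Longrightarrow> V \<in> E \<Longrightarrow> U \<inter> V \<in> E"
  unfolding is_end_def end_candidate_def by blast

lemma end_memberD:
  assumes "is_end T LS E" "U \<in> E"
  shows "openin T U" "coarsely_clopen (topspace T) LS U" "\<not> ls_bounded LS U"
  using assms unfolding is_end_def end_candidate_def end_set_def by blast+

lemma end_nonempty: "is_end T LS E \<Longrightarrow> \<exists>U. U \<in> E"
  unfolding is_end_def end_candidate_def by blast

lemma end_bounded_empty: "is_end T LS E \<Longrightarrow> ls_bounded LS {}"
  using end_nonempty end_memberD(2) bounded_empty_if_coarsely_clopen by blast

lemma end_topspace_nonempty: "is_end T LS E \<Longrightarrow> topspace T \<noteq> {}"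
  using end_nonempty end_memberD end_bounded_empty openin_subset by (metis subset_empty)

lemma end_absorb_unbounded_meets:
  assumes E: "is_end T LS E" and W: "openin T W" "coarsely_clopen (topspace T) LS W"
    and meets: "\<And>V. V \<in> E \<Longrightarrow> \<not> ls_bounded LS (W \<inter> V)"
  shows "W \<in> E"
proof -
  define E' where "E' = {A. end_set T LS A \<and> (\<exists>V\<in>E. W \<inter> V \<subseteq> A)}"
  have member: "A \<in> E' \<longleftrightarrow> end_set T LS A \<and> (\<exists>V\<in>E. W \<inter> V \<subseteq> A)" for A
    unfolding E'_def by simp
  have Int_closed: "A \<inter> B \<in> E'" if A: "A \<in> E'" and B: "B \<in> E'" for A B
  proof -
    obtain V V' where "V \<in> E" "W \<inter> V \<subseteq> A" "V' \<in> E" "W \<inter> V' \<subseteq> B"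
      using A B unfolding member by blast
    then have "V \<inter> V' \<in> E" and sub: "W \<inter> (V \<inter> V') \<subseteq> A \<inter> B"
      using end_Int[OF E] by blast+
    then have "\<not> ls_bounded LS (A \<inter> B)"
      using meets ls_bounded_subset by blast
    moreover have "openin T (A \<inter> B)" "coarsely_clopen (topspace T) LS (A \<inter> B)"
      using A B coarsely_clopen_Int unfolding member end_set_def by blast+
    ultimately show ?thesis
      unfolding member end_set_def using \<open>V \<inter> V' \<in> E\<close> sub by blast
  qed
  have "E \<subseteq> E'"
  proof
    fix V assume "V \<in> E"
    then show "V \<in> E'"
      unfolding member end_set_def using end_memberD[OF E] by blast
  qed
  moreover have "W \<in> E'"
  proof -
    obtain V where "V \<in> E"
      using end_nonempty[OF E] by blast
    then have "\<not> ls_bounded LS W"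
      using meets ls_bounded_subset[of LS W "W \<inter> V"] by blast
    then show ?thesis
      unfolding member end_set_def using W \<open>V \<in> E\<close> by blast
  qed
  moreover have "end_candidate T LS E'"
    unfolding end_candidate_def using \<open>W \<in> E'\<close> Int_closed member by blast
  ultimately show ?thesis
    using end_maximal[OF E] by blast
qed

lemma end_absorb:
  assumes E: "is_end T LS E" and "U \<in> E"
    and W: "openin T W" "coarsely_clopen (topspace T) LS W" and "ls_bounded LS (U - W)"
  shows "W \<in> E"
proof (rule end_absorb_unbounded_meets[OF E W])
  fix V assume "V \<in> E"
  then have "\<not> ls_bounded LS (U \<inter> V)"
    using end_Int end_memberD(3) E \<open>U \<in> E\<close> by blast
  moreover have "U \<inter> V - W \<inter> V \<subseteq> U - W" by blast
  ultimately show "\<not> ls_bounded LS (W \<inter> V)"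
    using bounded_by_diff ls_bounded_subset \<open>ls_bounded LS (U - W)\<close> by blast
qed

text \<open>Both stars of A and of its complement would otherwise belong to E, but they meet in
  a bounded set.\<close>

lemma end_dichotomy:
  assumes E: "is_end T LS E" and A: "coarsely_clopen (topspace T) LS A"
  shows "(\<exists>U\<in>E. ls_bounded LS (U - A)) \<or> (\<exists>U\<in>E. ls_bounded LS (U \<inter> A))"
proof (rule ccontr)
  assume "\<not> ?thesis"
  then have out: "\<And>U. U \<in> E \<Longrightarrow> \<not> ls_bounded LS (U - A)"
    and inn: "\<And>U. U \<in> E \<Longrightarrow> \<not> ls_bounded LS (U \<inter> A)" by blast+
  obtain \<U> where \<U>: "\<U> \<in> LS" "\<forall>U\<in>\<U>. openin T U"
    using open_uniform_cover by blast
  have A_space: "A \<subseteq> topspace T"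
    using A unfolding coarsely_clopen_def by blast
  have "st A \<U> \<in> E"
  proof (rule end_absorb_unbounded_meets[OF E])
    show "openin T (st A \<U>)" "coarsely_clopen (topspace T) LS (st A \<U>)"
      using openin_st \<U> coarsely_clopen_st[OF A \<U>(1)] by blast+
    fix V assume "V \<in> E"
    have "V \<inter> A \<subseteq> st A \<U> \<inter> V"
      using subset_st[OF \<U>(1) A_space] by blast
    then show "\<not> ls_bounded LS (st A \<U> \<inter> V)"
      using inn[OF \<open>V \<in> E\<close>] ls_bounded_subset by blast
  qed
  moreover have "st (topspace T - A) \<U> \<in> E"
  proof (rule end_absorb_unbounded_meets[OF E])
    show "openin T (st (topspace T - A) \<U>)"
      "coarsely_clopen (topspace T) LS (st (topspace T - A) \<U>)"
      using openin_st \<U> coarsely_clopen_st[OF coarsely_clopen_complement[OF A] \<U>(1)] by blast+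
    fix V assume "V \<in> E"
    then have "V - A \<subseteq> st (topspace T - A) \<U> \<inter> V"
      using subset_st[OF \<U>(1), of "topspace T - A"] end_memberD(1)[OF E] openin_subset by blast
    then show "\<not> ls_bounded LS (st (topspace T - A) \<U> \<inter> V)"
      using out[OF \<open>V \<in> E\<close>] ls_bounded_subset by blast
  qed
  ultimately show False
    using end_Int[OF E] end_memberD(3)[OF E] coarsely_clopen_boundary[OF A \<U>(1)] by blast
qed

lemma topspace_in_end:
  assumes E: "is_end T LS E"
  shows "topspace T \<in> E"
proof -
  obtain U where "U \<in> E"
    using end_nonempty[OF E] by blast
  moreover have "U - topspace T = {}"
    using end_memberD(1)[OF E \<open>U \<in> E\<close>] openin_subset by blast
  then have "ls_bounded LS (U - topspace T)"
    using end_bounded_empty[OF E] by (simp only:)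
  ultimately show ?thesis
    using end_absorb[OF E _ openin_topspace coarsely_clopen_topspace[OF end_bounded_empty[OF E]]]
    by blast
qed

subsection \<open>The topology on ends\<close>

lemma openin_ends_basic:
  assumes "openin T U" "coarsely_clopen (topspace T) LS U"
  shows "openin (ends_topology T LS) {E \<in> Ends T LS. U \<in> E}"
  unfolding ends_topology_def openin_subtopology
proof (intro exI conjI)
  show "openin (topology_generated_by
      {{E \<in> Ends T LS. U \<in> E} | U. openin T U \<and> coarsely_clopen (topspace T) LS U})
      {E \<in> Ends T LS. U \<in> E}"
    by (rule topology_generated_by_Basis) (use assms in blast)
qed blast

lemma topspace_ends_topology: "topspace (ends_topology T LS) = Ends T LS"
proof -
  have "E \<in> \<Union>{{E \<in> Ends T LS. U \<in> E} | U. openin T U \<and> coarsely_clopen (topspace T) LS U}"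
    if "E \<in> Ends T LS" for E
    using that topspace_in_end end_bounded_empty coarsely_clopen_topspace
    unfolding Ends_def by blast
  then show ?thesis
    unfolding ends_topology_def topspace_subtopology topology_generated_by_topspace by blast
qed

lemma continuous_map_into_ends:
  assumes "\<And>E. E \<in> topspace S \<Longrightarrow> h E \<in> Ends T LS"
    and "\<And>U. openin T U \<Longrightarrow> coarsely_clopen (topspace T) LS U \<Longrightarrow>
           openin S {E \<in> topspace S. U \<in> h E}"
  shows "continuous_map S (ends_topology T LS) h"
  unfolding ends_topology_def
proof (rule continuous_map_into_subtopology)
  show "continuous_map S (topology_generated_by
      {{E \<in> Ends T LS. U \<in> E} | U. openin T U \<and> coarsely_clopen (topspace T) LS U}) h"
  proof (rule continuous_on_generated_topo)
    fix B assume "B \<in> {{E \<in> Ends T LS. U \<in> E} | U. openin T U \<and> coarsely_clopen (topspace T) LS U}"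
    then obtain U where "openin T U" "coarsely_clopen (topspace T) LS U"
      and "B = {E \<in> Ends T LS. U \<in> E}" by blast
    moreover have "h -` {E \<in> Ends T LS. U \<in> E} \<inter> topspace S = {E \<in> topspace S. U \<in> h E}"
      using assms(1) by blast
    ultimately show "openin S (h -` B \<inter> topspace S)"
      using assms(2) by simp
  next
    show "h ` topspace S \<subseteq> \<Union>{{E \<in> Ends T LS. U \<in> E} | U. openin T U \<and> coarsely_clopen (topspace T) LS U}"
      using assms(1) topspace_ends_topology unfolding ends_topology_def by auto
  qed
  show "h \<in> topspace S \<rightarrow> Ends T LS"
    using assms(1) by blast
qed

end

subsection \<open>Induced map on ends\<close>

definition ends_map :: "'a topology \<Rightarrow> 'a set set set \<Rightarrow> 'b topology \<Rightarrow> 'b set set set \<Rightarrow>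
    ('a \<Rightarrow> 'b) \<Rightarrow> 'a set set \<Rightarrow> 'b set set" where
  "ends_map TX LSX TY LSY f E = {V. end_set TY LSY V \<and>
      (\<exists>U\<in>E. ls_bounded LSX (U - {x \<in> topspace TX. f x \<in> V}))}"

locale ls_coarse_map = X: topological_coarse_space TX LSX + Y: topological_coarse_space TY LSY
  for TX :: "'a topology" and LSX and TY :: "'b topology" and LSY +
  fixes f :: "'a \<Rightarrow> 'b"
  assumes maps_into: "f \<in> topspace TX \<rightarrow> topspace TY"
    and coarse: "coarse_map (topspace TX) LSX (topspace TY) LSY f"
    and ls_continuous: "ls_continuous LSX LSY f"
begin

abbreviation preimage :: "'b set \<Rightarrow> 'a set" where
  "preimage V \<equiv> {x \<in> topspace TX. f x \<in> V}"

abbreviation induced :: "'a set set \<Rightarrow> 'b set set" where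
  "induced \<equiv> ends_map TX LSX TY LSY f"

lemma bounded_preimage: "ls_bounded LSY B \<Longrightarrow> ls_bounded LSX (preimage B)"
  using coarse Y.bounded_subset_topspace unfolding coarse_map_def by blast

lemma coarsely_clopen_preimage:
  assumes B: "coarsely_clopen (topspace TY) LSY B"
  shows "coarsely_clopen (topspace TX) LSX (preimage B)"
  unfolding coarsely_clopen_def
proof (intro conjI ballI)
  show "preimage B \<subseteq> topspace TX" by blast
  fix \<U> assume "\<U> \<in> LSX"
  then obtain \<V> where \<V>: "\<V> \<in> LSY" "refines ((\<lambda>U. f ` U) ` \<U>) \<V>"
    using ls_continuous unfolding ls_continuous_def ub_family_def by blast
  have image_in: "\<exists>V\<in>\<V>. f ` U \<subseteq> V" if "U \<in> \<U>" for U
    using \<V>(2) that unfolding refines_def by blast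
  have "st (preimage B) \<U> \<inter> st (topspace TX - preimage B) \<U> \<subseteq>
      preimage (st B \<V> \<inter> st (topspace TY - B) \<V>)"
  proof
    fix x assume x: "x \<in> st (preimage B) \<U> \<inter> st (topspace TX - preimage B) \<U>"
    then obtain U1 a where U1: "U1 \<in> \<U>" "x \<in> U1" "a \<in> U1" "a \<in> preimage B"
      unfolding st_def by blast
    obtain U2 b where U2: "U2 \<in> \<U>" "x \<in> U2" "b \<in> U2" "b \<in> topspace TX - preimage B"
      using x unfolding st_def by blast
    obtain V1 where V1: "V1 \<in> \<V>" "f ` U1 \<subseteq> V1"
      using image_in[OF U1(1)] by blast
    obtain V2 where V2: "V2 \<in> \<V>" "f ` U2 \<subseteq> V2"
      using image_in[OF U2(1)] by blast
    have "x \<in> topspace TX"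
      using X.uniform_cover[OF \<open>\<U> \<in> LSX\<close>] U1 by blast
    moreover have "f x \<in> st B \<V>"
      unfolding st_def using V1 U1 by blast
    moreover have "f b \<in> topspace TY - B"
      using U2(4) maps_into by blast
    then have "f x \<in> st (topspace TY - B) \<V>"
      unfolding st_def using V2 U2 by blast
    ultimately show "x \<in> preimage (st B \<V> \<inter> st (topspace TY - B) \<V>)"
      by blast
  qed
  then show "ls_bounded LSX (st (preimage B) \<U> \<inter> st (topspace TX - preimage B) \<U>)"
    using bounded_preimage[OF Y.coarsely_clopen_boundary[OF B \<V>(1)]] ls_bounded_subset by blast
qed

lemma induced_end_candidate:
  assumes E: "is_end TX LSX E"
  shows "end_candidate TY LSY (induced E)"
proof -
  obtain U0 where U0: "U0 \<in> E"
    using X.end_nonempty[OF E] by blast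
  have U0_space: "U0 \<subseteq> topspace TX"
    using X.end_memberD(1)[OF E U0] openin_subset by blast
  have preimage_topspace: "preimage (topspace TY) = topspace TX"
    using maps_into by blast
  have "\<not> ls_bounded LSY (topspace TY)"
  proof
    assume "ls_bounded LSY (topspace TY)"
    then have "ls_bounded LSX (topspace TX)"
      using bounded_preimage preimage_topspace by metis
    then show False
      using X.end_memberD(3)[OF E U0] ls_bounded_subset U0_space by blast
  qed
  moreover have "topspace TY \<noteq> {}"
    using X.end_topspace_nonempty[OF E] maps_into by blast
  ultimately have "end_set TY LSY (topspace TY)"
    unfolding end_set_def using Y.coarsely_clopen_topspace Y.bounded_empty by blast
  moreover have "U0 - preimage (topspace TY) = {}"
    using preimage_topspace U0_space by blast
  then have "ls_bounded LSX (U0 - preimage (topspace TY))"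
    using X.end_bounded_empty[OF E] by (simp only:)
  ultimately have "topspace TY \<in> induced E"
    unfolding ends_map_def using U0 by blast
  moreover have "V1 \<inter> V2 \<in> induced E" if V1: "V1 \<in> induced E" and V2: "V2 \<in> induced E" for V1 V2
  proof -
    obtain U1 U2 where "U1 \<in> E" "ls_bounded LSX (U1 - preimage V1)"
      and "U2 \<in> E" "ls_bounded LSX (U2 - preimage V2)"
      and V: "end_set TY LSY V1" "end_set TY LSY V2"
      using V1 V2 unfolding ends_map_def by blast
    moreover have "U1 \<inter> U2 - preimage (V1 \<inter> V2) \<subseteq> (U1 - preimage V1) \<union> (U2 - preimage V2)"
      by blast
    ultimately have "U1 \<inter> U2 \<in> E" and bd: "ls_bounded LSX (U1 \<inter> U2 - preimage (V1 \<inter> V2))"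
      using X.end_Int[OF E] X.bounded_Un ls_bounded_subset by blast+
    then have "\<not> ls_bounded LSY (V1 \<inter> V2)"
      using X.end_memberD(3)[OF E] X.bounded_by_diff bounded_preimage by blast
    then have "end_set TY LSY (V1 \<inter> V2)"
      using V Y.coarsely_clopen_Int unfolding end_set_def by blast
    then show ?thesis
      unfolding ends_map_def using \<open>U1 \<inter> U2 \<in> E\<close> bd by blast
  qed
  ultimately show ?thesis
    unfolding end_candidate_def ends_map_def by blast
qed

lemma induced_has_almost_complement:
  assumes E: "is_end TX LSX E" and V: "coarsely_clopen (topspace TY) LSY V"
    and "U \<in> E" and bd: "ls_bounded LSX (U \<inter> preimage V)"
  shows "\<exists>W\<in>induced E. ls_bounded LSY (V \<inter> W)"
proof -
  obtain \<V> where \<V>: "\<V> \<in> LSY" "\<forall>V\<in>\<V>. openin TY V"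
    using Y.open_uniform_cover by blast
  define W where "W = st (topspace TY - V) \<V>"
  have compl_W: "topspace TY - V \<subseteq> W"
    unfolding W_def using Y.subset_st[OF \<V>(1)] by blast
  have U_space: "U \<subseteq> topspace TX"
    using X.end_memberD(1)[OF E \<open>U \<in> E\<close>] openin_subset by blast
  have "U - preimage W \<subseteq> U \<inter> preimage V"
    using compl_W U_space maps_into by blast
  then have bd_UW: "ls_bounded LSX (U - preimage W)"
    using bd ls_bounded_subset by blast
  have "\<not> ls_bounded LSY W"
  proof
    assume "ls_bounded LSY W"
    then have "ls_bounded LSX (preimage (topspace TY - V))"
      using compl_W ls_bounded_subset bounded_preimage by blast
    then have "ls_bounded LSX (U \<inter> preimage V \<union> preimage (topspace TY - V))"
      using X.bounded_Un[OF bd] by blast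
    moreover have "U \<subseteq> U \<inter> preimage V \<union> preimage (topspace TY - V)"
      using U_space maps_into by blast
    ultimately show False
      using X.end_memberD(3)[OF E \<open>U \<in> E\<close>] ls_bounded_subset by blast
  qed
  moreover have "openin TY W"
    unfolding W_def using openin_st \<V>(2) by blast
  moreover have "coarsely_clopen (topspace TY) LSY W"
    unfolding W_def using Y.coarsely_clopen_st[OF Y.coarsely_clopen_complement[OF V] \<V>(1)] .
  ultimately have "W \<in> induced E"
    unfolding ends_map_def end_set_def using \<open>U \<in> E\<close> bd_UW by blast
  moreover have "V \<subseteq> st V \<V>"
    using Y.subset_st[OF \<V>(1)] V unfolding coarsely_clopen_def by blast
  then have "V \<inter> W \<subseteq> st V \<V> \<inter> st (topspace TY - V) \<V>"
    unfolding W_def by blast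
  ultimately show ?thesis
    using Y.coarsely_clopen_boundary[OF V \<V>(1)] ls_bounded_subset by blast
qed

lemma induced_is_end:
  assumes E: "is_end TX LSX E"
  shows "is_end TY LSY (induced E)"
  unfolding is_end_def
proof (intro conjI allI impI)
  show "end_candidate TY LSY (induced E)"
    using induced_end_candidate[OF E] .
  fix E' assume E': "end_candidate TY LSY E' \<and> induced E \<subseteq> E'"
  show "E' = induced E"
  proof
    show "E' \<subseteq> induced E"
    proof
      fix V assume "V \<in> E'"
      then have V: "end_set TY LSY V"
        using E' unfolding end_candidate_def by blast
      then have V_cc: "coarsely_clopen (topspace TY) LSY V"
        unfolding end_set_def by blast
      have "\<not> (\<exists>U\<in>E. ls_bounded LSX (U \<inter> preimage V))"
      proof
        assume "\<exists>U\<in>E. ls_bounded LSX (U \<inter> preimage V)"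
        then obtain W where "W \<in> E'" "ls_bounded LSY (V \<inter> W)"
          using induced_has_almost_complement[OF E V_cc] E' by blast
        then show False
          using \<open>V \<in> E'\<close> E' unfolding end_candidate_def end_set_def by blast
      qed
      then show "V \<in> induced E"
        using X.end_dichotomy[OF E coarsely_clopen_preimage[OF V_cc]] V
        unfolding ends_map_def by blast
    qed
  qed (use E' in blast)
qed

lemma induced_member_iff:
  assumes E: "is_end TX LSX E"
    and V: "openin TY V" "coarsely_clopen (topspace TY) LSY V"
    and \<U>: "\<U> \<in> LSX" "\<forall>U\<in>\<U>. openin TX U"
  shows "V \<in> induced E \<longleftrightarrow> \<not> ls_bounded LSY V \<and> st (preimage V) \<U> \<in> E"
proof -
  have pre_cc: "coarsely_clopen (topspace TX) LSX (preimage V)"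
    using coarsely_clopen_preimage[OF V(2)] .
  have "preimage V \<subseteq> st (preimage V) \<U>"
    by (rule X.subset_st[OF \<U>(1)]) auto
  then have "st (preimage V) \<U> \<in> E" if "U \<in> E" "ls_bounded LSX (U - preimage V)" for U
    using X.end_absorb[OF E that(1)] openin_st \<U> X.coarsely_clopen_st[OF pre_cc \<U>(1)]
      ls_bounded_subset[OF that(2)]
    by (metis Diff_mono order_refl)
  then show ?thesis
    using V X.bounded_st_diff[OF pre_cc \<U>(1)] unfolding ends_map_def end_set_def by blast
qed

lemma continuous_induced:
  "continuous_map (ends_topology TX LSX) (ends_topology TY LSY) induced"
proof (rule Y.continuous_map_into_ends)
  show "induced E \<in> Ends TY LSY" if "E \<in> topspace (ends_topology TX LSX)" for E
    using that induced_is_end by (simp add: X.topspace_ends_topology Ends_def)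
next
  fix V assume V: "openin TY V" "coarsely_clopen (topspace TY) LSY V"
  obtain \<U> where \<U>: "\<U> \<in> LSX" "\<forall>U\<in>\<U>. openin TX U"
    using X.open_uniform_cover by blast
  have "{E \<in> topspace (ends_topology TX LSX). V \<in> induced E} =
      (if ls_bounded LSY V then {} else {E \<in> Ends TX LSX. st (preimage V) \<U> \<in> E})"
    using induced_member_iff[OF _ V \<U>] by (auto simp: X.topspace_ends_topology Ends_def)
  moreover have "openin (ends_topology TX LSX) {E \<in> Ends TX LSX. st (preimage V) \<U> \<in> E}"
    using X.openin_ends_basic openin_st \<U> X.coarsely_clopen_st[OF coarsely_clopen_preimage[OF V(2)] \<U>(1)]
    by blast
  ultimately show "openin (ends_topology TX LSX) {E \<in> topspace (ends_topology TX LSX). V \<in> induced E}"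
    by simp
qed

lemma induced_left_inverse:
  assumes g: "ls_coarse_map TY LSY TX LSX g"
    and close: "close_maps (topspace TX) LSX (g \<circ> f) id"
    and E: "is_end TX LSX E"
  shows "ends_map TY LSY TX LSX g (induced E) = E"
proof -
  interpret g: ls_coarse_map TY LSY TX LSX g by (rule g)
  have "U \<in> ends_map TY LSY TX LSX g (induced E)" if "U \<in> E" for U
  proof -
    have U: "openin TX U" "coarsely_clopen (topspace TX) LSX U" "\<not> ls_bounded LSX U"
      using X.end_memberD[OF E that] by blast+
    obtain \<V> where \<V>: "\<V> \<in> LSY" "\<forall>V\<in>\<V>. openin TY V"
      using Y.open_uniform_cover by blast
    define V where "V = st (g.preimage U) \<V>"
    have V_cc: "coarsely_clopen (topspace TY) LSY V"
      unfolding V_def using Y.coarsely_clopen_st[OF g.coarsely_clopen_preimage[OF U(2)] \<V>(1)] .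
    have "g.preimage U \<subseteq> V"
      unfolding V_def by (rule Y.subset_st[OF \<V>(1)]) auto
    then have "U - preimage V \<subseteq> U - {x \<in> topspace TX. (g \<circ> f) x \<in> U}"
      using maps_into by auto
    then have bd: "ls_bounded LSX (U - preimage V)"
      using X.close_to_id_preimage[OF close U(2)] ls_bounded_subset by blast
    then have "\<not> ls_bounded LSY V"
      using U(3) X.bounded_by_diff bounded_preimage by blast
    then have "V \<in> induced E"
      using V_cc bd \<open>U \<in> E\<close> openin_st \<V> unfolding ends_map_def end_set_def V_def by blast
    moreover have "ls_bounded LSY (V - g.preimage U)"
      unfolding V_def using Y.bounded_st_diff[OF g.coarsely_clopen_preimage[OF U(2)] \<V>(1)] .
    ultimately show ?thesis
      using U unfolding ends_map_def end_set_def by blast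
  qed
  then show ?thesis
    using X.end_maximal[OF E X.end_candidate_if_end[OF g.induced_is_end[OF induced_is_end[OF E]]]]
    by blast
qed

end

theorem corollary6p15:
  fixes TX :: "'a topology" and LSX :: "'a set set set"
    and TY :: "'b topology" and LSY :: "'b set set set"
  assumes "top_coarse_space TX LSX"
    and "top_coarse_space TY LSY"
    and "coarsely_equivalent TX LSX TY LSY"
  shows "ends_topology TX LSX homeomorphic_space ends_topology TY LSY"
proof -
  obtain f g where f: "ls_coarse_map TX LSX TY LSY f" and g: "ls_coarse_map TY LSY TX LSX g"
    and gf: "close_maps (topspace TX) LSX (g \<circ> f) id"
    and fg: "close_maps (topspace TY) LSY (f \<circ> g) id"
    using assms unfolding coarsely_equivalent_def
    by (auto simp: ls_coarse_map_def ls_coarse_map_axioms_def topological_coarse_space_def)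
  interpret f: ls_coarse_map TX LSX TY LSY f by (rule f)
  interpret g: ls_coarse_map TY LSY TX LSX g by (rule g)
  have "homeomorphic_maps (ends_topology TX LSX) (ends_topology TY LSY) f.induced g.induced"
    unfolding homeomorphic_maps_def f.X.topspace_ends_topology f.Y.topspace_ends_topology Ends_def
    using f.continuous_induced g.continuous_induced
      f.induced_left_inverse[OF g gf] g.induced_left_inverse[OF f fg]
    by simp
  then show ?thesis
    unfolding homeomorphic_space_def by blast
qed

end
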